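(* Let $k\ge1$ be an integer, $p$ a prime, $\theta>0$, and $\mathbf u=(u_1,\dots,u_{2k})\in\mathbb C^{2k}$ with $\Re(u_i)\ge\theta$ for all $i$. Then $$B_{p,2k}(\mathbf u;0)=\prod_{1\le i\le j\le2k}\Big(1-\frac1{p^{u_i+u_j}}\Big)^{-1}C_{p,2k}(\mathbf u),$$ where $$C_{p,2k}(\mathbf u)=\prod_{1\le i<j\le2k}\Big(1-\frac1{p^{u_i+u_j}}\Big)\sum_{\substack{A\subseteq\{1,\dots,2k\}\\|A|\text{ even}}}\prod_{i\in A}\frac1{p^{u_i}}=1+O\Big(\frac1{p^{4\theta}}\Big).$$
   Context: For a prime $p$, an integer $k\ge1$, $\mathbf u\in\mathbb C^k$ and $a\in\{0,1\}$, $$B_{p,k}(\mathbf u;a)=\sum_{\substack{n_1,\dots,n_k\ge0\\ n_1+\dots+n_k\equiv a\ (\mathrm{mod}\ 2)}}\frac1{p^{n_1u_1+\dots+n_ku_k}}.$$ *)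

theory Defs
  imports "HOL-Analysis.Analysis"
begin

text \<open>Vectors u in C^k are functions nat => complex, read on indices 1..k.
  Tuples (n_1,...,n_k) of naturals are functions nat => nat vanishing outside 1..k.\<close>

definition Bpk :: "nat \<Rightarrow> nat \<Rightarrow> (nat \<Rightarrow> complex) \<Rightarrow> nat \<Rightarrow> complex" where
  "Bpk p k u a =
     infsum (\<lambda>n. 1 / (of_nat p) powr (\<Sum>i\<in>{1..k}. of_nat (n i) * u i))
       {n :: nat \<Rightarrow> nat. (\<forall>i. i \<notin> {1..k} \<longrightarrow> n i = 0) \<and> (\<Sum>i\<in>{1..k}. n i) mod 2 = a mod 2}"

definition Cpk :: "nat \<Rightarrow> nat \<Rightarrow> (nat \<Rightarrow> complex) \<Rightarrow> complex" where
  "Cpk p k u =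
     (\<Prod>i\<in>{1..k}. \<Prod>j\<in>{i<..k}. (1 - 1 / (of_nat p) powr (u i + u j)))
     * (\<Sum>A\<in>{A. A \<subseteq> {1..k} \<and> even (card A)}. \<Prod>i\<in>A. 1 / (of_nat p) powr (u i))"

end

theory Submission
  imports Defs
begin

text \<open>Write x_i = p^(-u_i). Then B(u;0) is the even part (F(x) + F(-x))/2 of the geometric
  series F(x) = \<Prod>_i 1/(1 - x_i). Since 2 \<Sum>_{|A| even} \<Prod>_{i\<in>A} x_i = \<Prod>_i (1 + x_i) + \<Prod>_i (1 - x_i)
  and (1 \<plusminus> x)/(1 - x^2) = 1/(1 \<mp> x), this even part equals \<Prod>_{i\<le>j} (1 - x_i x_j)^(-1) C once the
  off-diagonal factors i < j cancel.

  For the estimate let e = \<Sum>_{i<j} x_i x_j and q = p^(-\<theta>), so that |x_i| \<le> q \<le> 1. Then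
  \<Prod>_{i<j} (1 - x_i x_j) = 1 - e + O(q^4), while the sum over even subsets is 1 + e + O(q^4)
  because its terms with |A| \<ge> 4 are O(q^4). The terms linear in e cancel in the product,
  leaving C = 1 - e^2 + O(q^4) = 1 + O(q^4).\<close>

lemma has_sum_geometric:
  fixes z :: "'a::{real_normed_field,banach}"
  assumes "norm z < 1"
  shows "((\<lambda>n. z ^ n) has_sum (1 / (1 - z))) UNIV"
proof (rule norm_summable_imp_has_sum)
  show "summable (\<lambda>n. norm (z ^ n))"
    using assms by (auto simp: norm_power intro!: summable_geometric)
  show "(\<lambda>n. z ^ n) sums (1 / (1 - z))"
    using geometric_sums[OF assms] by simp
qed

lemma has_sum_prod_PiE_abs:
  fixes f :: "'i \<Rightarrow> 'b \<Rightarrow> 'a::{real_normed_field,banach,second_countable_topology}"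
  assumes "finite I" and "\<And>i. i \<in> I \<Longrightarrow> countable (B i)"
    and "\<And>i. i \<in> I \<Longrightarrow> (f i has_sum s i) (B i)"
    and "\<And>i. i \<in> I \<Longrightarrow> (\<lambda>b. norm (f i b)) summable_on B i"
  shows "((\<lambda>g. \<Prod>i\<in>I. f i (g i)) has_sum (\<Prod>i\<in>I. s i)) (PiE I B)"
proof -
  have "(\<lambda>g. norm (\<Prod>i\<in>I. f i (g i))) summable_on PiE I B"
    using abs_summable_on_prod_PiE[of I B f] assms by (simp add: abs_summable_equivalent)
  moreover have "infsum (\<lambda>g. \<Prod>i\<in>I. f i (g i)) (PiE I B) = (\<Prod>i\<in>I. s i)"
    using assms by (subst infsum_prod_PiE_abs) (auto intro!: prod.cong infsumI)
  ultimately show ?thesis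
    by (metis abs_summable_summable has_sum_infsum)
qed

lemma has_sum_prod_geometric:
  fixes x :: "'i \<Rightarrow> 'a::{real_normed_field,banach,second_countable_topology}"
  assumes "finite I" and "\<And>i. i \<in> I \<Longrightarrow> norm (x i) < 1"
  shows "((\<lambda>n. \<Prod>i\<in>I. x i ^ n i) has_sum (\<Prod>i\<in>I. 1 / (1 - x i))) {n. \<forall>i. i \<notin> I \<longrightarrow> n i = 0}"
proof -
  have "((\<lambda>g. \<Prod>i\<in>I. x i ^ g i) has_sum (\<Prod>i\<in>I. 1 / (1 - x i))) (PiE I (\<lambda>_. UNIV))"
  proof (rule has_sum_prod_PiE_abs)
    fix i assume "i \<in> I"
    with assms show "((\<lambda>n. x i ^ n) has_sum 1 / (1 - x i)) UNIV"
      by (intro has_sum_geometric)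
    from \<open>i \<in> I\<close> assms show "(\<lambda>n. norm (x i ^ n)) summable_on UNIV"
      using has_sum_geometric[of "norm (x i)"] by (auto simp: norm_power intro: has_sum_imp_summable)
  qed (use assms in auto)
  also have "?this \<longleftrightarrow> ?thesis"
    by (rule has_sum_reindex_bij_witness[where i = "\<lambda>n. restrict n I" and j = "\<lambda>g i. if i \<in> I then g i else 0"])
       (auto simp: fun_eq_iff PiE_def extensional_def intro!: prod.cong)
  finally show ?thesis .
qed

lemma has_sum_prod_geometric_even:
  fixes x :: "'i \<Rightarrow> 'a::{real_normed_field,banach,second_countable_topology}"
  assumes "finite I" and "\<And>i. i \<in> I \<Longrightarrow> norm (x i) < 1"
  shows "((\<lambda>n. \<Prod>i\<in>I. x i ^ n i) has_sum ((\<Prod>i\<in>I. 1 / (1 - x i)) + (\<Prod>i\<in>I. 1 / (1 + x i))) / 2)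
           {n. (\<forall>i. i \<notin> I \<longrightarrow> n i = 0) \<and> even (\<Sum>i\<in>I. n i)}"
proof -
  let ?N = "{n. \<forall>i. i \<notin> I \<longrightarrow> n i = 0}"
  have sign: "(\<Prod>i\<in>I. (- x i) ^ n i) = (-1) ^ (\<Sum>i\<in>I. n i) * (\<Prod>i\<in>I. x i ^ n i)" for n
    by (subst prod.cong[OF refl power_minus]) (simp add: prod.distrib power_sum)
  have "((\<lambda>n. \<Prod>i\<in>I. x i ^ n i) has_sum (\<Prod>i\<in>I. 1 / (1 - x i))) ?N"
    using assms by (rule has_sum_prod_geometric)
  moreover have "((\<lambda>n. (-1) ^ (\<Sum>i\<in>I. n i) * (\<Prod>i\<in>I. x i ^ n i)) has_sum (\<Prod>i\<in>I. 1 / (1 + x i))) ?N"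
    using has_sum_prod_geometric[of I "\<lambda>i. - x i"] assms by (simp only: sign norm_minus_cancel diff_minus_eq_add)
  ultimately have "((\<lambda>n. ((1 + (-1) ^ (\<Sum>i\<in>I. n i)) * (\<Prod>i\<in>I. x i ^ n i)) / 2) has_sum
      ((\<Prod>i\<in>I. 1 / (1 - x i)) + (\<Prod>i\<in>I. 1 / (1 + x i))) / 2) ?N"
    unfolding distrib_right mult_1_left by (intro has_sum_add has_sum_divide_const)
  then show ?thesis
    by (rule has_sum_cong_neutral[THEN iffD1, rotated -1]) auto
qed

lemma sum_even_subsets_prod:
  fixes x :: "'i \<Rightarrow> 'a::comm_ring_1"
  assumes "finite I"
  shows "2 * (\<Sum>A | A \<subseteq> I \<and> even (card A). \<Prod>i\<in>A. x i) = (\<Prod>i\<in>I. 1 + x i) + (\<Prod>i\<in>I. 1 - x i)"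
proof -
  have plus: "(\<Prod>i\<in>I. 1 + x i) = (\<Sum>A\<in>Pow I. \<Prod>i\<in>A. x i)"
    using prod_add[OF assms, of x "\<lambda>_. 1"] by (simp add: add.commute)
  have minus: "(\<Prod>i\<in>I. 1 - x i) = (\<Sum>A\<in>Pow I. (-1) ^ card A * (\<Prod>i\<in>A. x i))"
    using prod_add[OF assms, of "\<lambda>i. - x i" "\<lambda>_. 1"]
    by (simp add: add.commute prod_uminus)
  have "(\<Prod>i\<in>I. 1 + x i) + (\<Prod>i\<in>I. 1 - x i)
      = (\<Sum>A\<in>Pow I. if even (card A) then 2 * (\<Prod>i\<in>A. x i) else 0)"
    unfolding plus minus sum.distrib[symmetric]
  proof (intro sum.cong refl)
    fix A :: "'i set"
    show "(\<Prod>i\<in>A. x i) + (-1) ^ card A * (\<Prod>i\<in>A. x i) = (if even (card A) then 2 * (\<Prod>i\<in>A. x i) else 0)"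
      by (cases "even (card A)") simp_all
  qed
  also have "\<dots> = (\<Sum>A\<in>{A \<in> Pow I. even (card A)}. 2 * (\<Prod>i\<in>A. x i))"
    using assms by (simp add: sum.inter_filter del: Pow_iff)
  also have "\<dots> = 2 * (\<Sum>A | A \<subseteq> I \<and> even (card A). \<Prod>i\<in>A. x i)"
    by (simp add: sum_distrib_left Pow_def)
  finally show ?thesis ..
qed

lemma prod_upper_inverse_mult_prod_strict_upper:
  fixes x :: "nat \<Rightarrow> 'a::field"
  assumes "\<And>i j. i \<in> {1..m} \<Longrightarrow> j \<in> {1..m} \<Longrightarrow> x i * x j \<noteq> 1"
  shows "(\<Prod>i\<in>{1..m}. \<Prod>j\<in>{i..m}. inverse (1 - x i * x j)) * (\<Prod>i\<in>{1..m}. \<Prod>j\<in>{i<..m}. 1 - x i * x j)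
           = (\<Prod>i\<in>{1..m}. inverse (1 - x i * x i))"
proof -
  have "(\<Prod>j\<in>{i..m}. inverse (1 - x i * x j)) * (\<Prod>j\<in>{i<..m}. 1 - x i * x j) = inverse (1 - x i * x i)"
    if "i \<in> {1..m}" for i
  proof -
    have "{i..m} = insert i {i<..m}" using that by auto
    moreover have "(\<Prod>j\<in>{i<..m}. inverse (1 - x i * x j)) * (\<Prod>j\<in>{i<..m}. 1 - x i * x j) = 1"
      using that assms by (simp add: prod.distrib[symmetric] prod.neutral)
    ultimately show ?thesis by (simp add: mult.assoc)
  qed
  then show ?thesis by (simp add: prod.distrib[symmetric])
qed

lemma even_part_prod_geometric_eq:
  fixes x :: "nat \<Rightarrow> 'a::field_char_0"
  assumes "\<And>i j. i \<in> {1..m} \<Longrightarrow> j \<in> {1..m} \<Longrightarrow> x i * x j \<noteq> 1"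
  shows "((\<Prod>i\<in>{1..m}. 1 / (1 - x i)) + (\<Prod>i\<in>{1..m}. 1 / (1 + x i))) / 2
       = (\<Prod>i\<in>{1..m}. \<Prod>j\<in>{i..m}. inverse (1 - x i * x j))
         * ((\<Prod>i\<in>{1..m}. \<Prod>j\<in>{i<..m}. 1 - x i * x j)
            * (\<Sum>A | A \<subseteq> {1..m} \<and> even (card A). \<Prod>i\<in>A. x i))"
proof -
  let ?D = "\<Prod>i\<in>{1..m}. inverse (1 - x i * x i)"
  have "1 / (1 - x i) = inverse (1 - x i * x i) * (1 + x i)"
    and "1 / (1 + x i) = inverse (1 - x i * x i) * (1 - x i)" if "i \<in> {1..m}" for i
  proof -
    have "1 - x i \<noteq> 0" "1 + x i \<noteq> 0" using assms[OF that that] by (auto simp: add_eq_0_iff)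
    moreover have "1 - x i * x i = (1 - x i) * (1 + x i)" by (simp add: algebra_simps)
    ultimately show "1 / (1 - x i) = inverse (1 - x i * x i) * (1 + x i)"
      and "1 / (1 + x i) = inverse (1 - x i * x i) * (1 - x i)"
      using assms[OF that that] by (simp_all add: field_simps)
  qed
  then have "(\<Prod>i\<in>{1..m}. 1 / (1 - x i)) = ?D * (\<Prod>i\<in>{1..m}. 1 + x i)"
    and "(\<Prod>i\<in>{1..m}. 1 / (1 + x i)) = ?D * (\<Prod>i\<in>{1..m}. 1 - x i)"
    by (simp_all only: prod.distrib[symmetric] cong: prod.cong)
  then have "((\<Prod>i\<in>{1..m}. 1 / (1 - x i)) + (\<Prod>i\<in>{1..m}. 1 / (1 + x i))) / 2
      = ?D * (2 * (\<Sum>A | A \<subseteq> {1..m} \<and> even (card A). \<Prod>i\<in>A. x i)) / 2"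
    by (simp add: sum_even_subsets_prod distrib_left)
  also have "\<dots> = ?D * (\<Sum>A | A \<subseteq> {1..m} \<and> even (card A). \<Prod>i\<in>A. x i)"
    by simp
  finally show ?thesis
    by (simp only: prod_upper_inverse_mult_prod_strict_upper[OF assms, symmetric] mult.assoc)
qed

lemma norm_prod_one_minus_sub_le:
  fixes y :: "'i \<Rightarrow> 'a::real_normed_field"
  assumes "finite T" and "\<And>t. t \<in> T \<Longrightarrow> norm (y t) \<le> c" and "c \<le> 1"
  shows "norm ((\<Prod>t\<in>T. 1 - y t) - (1 - (\<Sum>t\<in>T. y t))) \<le> 3 ^ card T * c\<^sup>2"
  using assms
proof (induction T rule: finite_induct)
  case empty
  then show ?case by simp
next
  case (insert a T)
  define s where "s = (\<Sum>t\<in>T. y t)"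
  define E where "E = (\<Prod>t\<in>T. 1 - y t) - (1 - s)"
  have c: "0 \<le> c" "norm (y a) \<le> c"
    using insert.prems norm_ge_zero order_trans by blast+
  have IH: "norm E \<le> 3 ^ card T * c\<^sup>2"
    unfolding E_def s_def using insert.IH insert.prems by auto
  have "norm s \<le> card T * c"
    unfolding s_def using norm_sum[of y T] sum_mono[of T "\<lambda>t. norm (y t)" "\<lambda>_. c"] insert.prems by auto
  then have "norm (y a * s) \<le> c * (card T * c)"
    using c by (simp add: norm_mult mult_mono)
  also have "\<dots> = card T * c\<^sup>2"
    by (simp add: power2_eq_square)
  also have "\<dots> \<le> 3 ^ card T * c\<^sup>2"
  proof (intro mult_right_mono)
    have "real (card T) \<le> 2 ^ card T"
      using less_exp[of "card T"] by (metis less_imp_le of_nat_le_iff of_nat_numeral of_nat_power)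
    also have "\<dots> \<le> 3 ^ card T" by (rule power_mono) auto
    finally show "real (card T) \<le> 3 ^ card T" .
  qed simp
  finally have ys: "norm (y a * s) \<le> 3 ^ card T * c\<^sup>2" .
  have "norm (y a * E) \<le> c * (3 ^ card T * c\<^sup>2)"
    unfolding norm_mult using c IH by (intro mult_mono) auto
  also have "\<dots> \<le> 3 ^ card T * c\<^sup>2"
    using c \<open>c \<le> 1\<close> by (intro mult_left_le_one_le) auto
  finally have yE: "norm (y a * E) \<le> 3 ^ card T * c\<^sup>2" .
  have "(\<Prod>t\<in>insert a T. 1 - y t) - (1 - (\<Sum>t\<in>insert a T. y t)) = E - y a * E + y a * s"
    using insert.hyps unfolding E_def s_def by (simp add: algebra_simps)
  also have "norm \<dots> \<le> norm E + norm (y a * E) + norm (y a * s)"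
    using norm_triangle_ineq[of "E - y a * E" "y a * s"] norm_triangle_ineq4[of E "y a * E"] by linarith
  also have "\<dots> \<le> 3 ^ card (insert a T) * c\<^sup>2"
    using IH yE ys insert.hyps by simp
  finally show ?case .
qed

lemma norm_mult_sub_one_le:
  fixes a b e :: "'a::real_normed_field"
  assumes a: "norm (a - (1 - e)) \<le> \<alpha> * q ^ 4" and b: "norm (b - (1 + e)) \<le> \<beta> * q ^ 4"
    and e: "norm e \<le> \<gamma> * q\<^sup>2"
    and "0 \<le> \<alpha>" "0 \<le> \<beta>" "0 \<le> \<gamma>" "0 \<le> q" "q \<le> 1"
  shows "norm (a * b - 1) \<le> (\<gamma>\<^sup>2 + (1 + \<gamma>) * \<beta> + \<alpha> * (1 + \<gamma> + \<beta>)) * q ^ 4"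
proof -
  have q: "q\<^sup>2 \<le> 1" "q ^ 4 \<le> 1"
    using assms by (simp_all add: power_le_one)
  have e1: "norm e \<le> \<gamma>"
    using e q \<open>0 \<le> \<gamma>\<close> by (meson mult_left_le order_trans)
  have "norm b \<le> 1 + norm e + norm (b - (1 + e))"
    using norm_triangle_ineq[of "1 + e" "b - (1 + e)"] norm_triangle_ineq[of 1 e] by simp
  also have "\<dots> \<le> 1 + \<gamma> + \<beta>"
    using e1 b mult_left_le[OF q(2) \<open>0 \<le> \<beta>\<close>] by linarith
  finally have nb: "norm b \<le> 1 + \<gamma> + \<beta>" .
  have n1e: "norm (1 - e) \<le> 1 + \<gamma>"
    using norm_triangle_ineq4[of 1 e] e1 by simp
  have "a * b - 1 = (a - (1 - e)) * b + (1 - e) * (b - (1 + e)) - e\<^sup>2"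
    by (simp add: algebra_simps power2_eq_square)
  also have "norm \<dots> \<le> norm (a - (1 - e)) * norm b + norm (1 - e) * norm (b - (1 + e)) + norm e ^ 2"
    using norm_triangle_ineq4[of "(a - (1 - e)) * b + (1 - e) * (b - (1 + e))" "e\<^sup>2"]
      norm_triangle_ineq[of "(a - (1 - e)) * b" "(1 - e) * (b - (1 + e))"]
    by (simp add: norm_mult norm_power)
  also have "\<dots> \<le> \<alpha> * q ^ 4 * (1 + \<gamma> + \<beta>) + (1 + \<gamma>) * (\<beta> * q ^ 4) + (\<gamma> * q\<^sup>2)\<^sup>2"
    using a b e nb n1e assms(4-7) by (intro add_mono mult_mono power_mono) auto
  also have "\<dots> = (\<gamma>\<^sup>2 + (1 + \<gamma>) * \<beta> + \<alpha> * (1 + \<gamma> + \<beta>)) * q ^ 4"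
    by (simp add: algebra_simps power2_eq_square power4_eq_xxxx)
  finally show ?thesis .
qed

lemma bij_betw_strict_upper_pairs_doubletons:
  fixes n :: nat
  shows "bij_betw (\<lambda>(i, j). {i, j}) (SIGMA i:{1..n}. {i<..n}) {A. A \<subseteq> {1..n} \<and> card A = 2}"
proof (rule bij_betwI')
  fix A :: "nat set" assume "A \<in> {A. A \<subseteq> {1..n} \<and> card A = 2}"
  then obtain a b where A: "A = {a, b}" "a \<noteq> b" "A \<subseteq> {1..n}"
    by (auto simp: card_2_iff)
  then obtain i j where "A = {i, j}" "i < j" "{i, j} \<subseteq> {1..n}"
    by (cases a b rule: linorder_cases) (auto simp: insert_commute)
  then show "\<exists>p\<in>(SIGMA i:{1..n}. {i<..n}). A = (\<lambda>(i, j). {i, j}) p"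
    by (intro bexI[of _ "(i, j)"]) auto
qed (auto simp: doubleton_eq_iff)

lemma card_strict_upper_pairs:
  fixes n :: nat
  shows "card (SIGMA i:{1..n}. {i<..n}) = n choose 2"
proof -
  have "card (SIGMA i:{1..n}. {i<..n}) = card {A. A \<subseteq> {1..n} \<and> card A = 2}"
    by (rule bij_betw_same_card[OF bij_betw_strict_upper_pairs_doubletons])
  also have "\<dots> = n choose 2"
    using n_subsets[of "{1..n}" 2] by simp
  finally show ?thesis .
qed

lemma norm_prod_le_power_card:
  fixes x :: "'i \<Rightarrow> 'a::real_normed_field"
  assumes "\<And>i. i \<in> A \<Longrightarrow> norm (x i) \<le> q"
  shows "norm (\<Prod>i\<in>A. x i) \<le> q ^ card A"
proof -
  have "norm (\<Prod>i\<in>A. x i) = (\<Prod>i\<in>A. norm (x i))"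
    by (rule prod_norm[symmetric])
  also have "\<dots> \<le> (\<Prod>i\<in>A. q)"
    using assms by (intro prod_mono) auto
  finally show ?thesis by simp
qed

lemma norm_prod_strict_upper_sub_le:
  fixes x :: "nat \<Rightarrow> 'a::real_normed_field"
  assumes "\<And>i. i \<in> {1..n} \<Longrightarrow> norm (x i) \<le> q" and "0 \<le> q" and "q \<le> 1"
  shows "norm ((\<Prod>i\<in>{1..n}. \<Prod>j\<in>{i<..n}. 1 - x i * x j)
           - (1 - (\<Sum>(i, j)\<in>(SIGMA i:{1..n}. {i<..n}). x i * x j))) \<le> 3 ^ (n choose 2) * q ^ 4"
proof -
  let ?T = "SIGMA i:{1..n}. {i<..n}"
  have "(\<Prod>i\<in>{1..n}. \<Prod>j\<in>{i<..n}. 1 - x i * x j) = (\<Prod>(i, j)\<in>?T. 1 - x i * x j)"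
    by (rule prod.Sigma) auto
  moreover have "norm ((\<Prod>(i, j)\<in>?T. 1 - x i * x j) - (1 - (\<Sum>(i, j)\<in>?T. x i * x j)))
      \<le> 3 ^ card ?T * (q\<^sup>2)\<^sup>2"
    unfolding case_prod_unfold
  proof (rule norm_prod_one_minus_sub_le)
    fix t assume "t \<in> ?T"
    then show "norm (x (fst t) * x (snd t)) \<le> q\<^sup>2"
      using assms(1)[of "fst t"] assms(1)[of "snd t"] \<open>0 \<le> q\<close>
      by (auto simp: norm_mult power2_eq_square intro: mult_mono)
  qed (use assms in \<open>auto simp: power_le_one\<close>)
  ultimately show ?thesis
    by (simp only: card_strict_upper_pairs flip: power_mult) simp
qed

lemma norm_sum_even_subsets_sub_le:
  fixes x :: "nat \<Rightarrow> 'a::real_normed_field"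
  assumes "\<And>i. i \<in> {1..n} \<Longrightarrow> norm (x i) \<le> q" and "0 \<le> q" and "q \<le> 1"
  shows "norm ((\<Sum>A | A \<subseteq> {1..n} \<and> even (card A). \<Prod>i\<in>A. x i)
           - (1 + (\<Sum>(i, j)\<in>(SIGMA i:{1..n}. {i<..n}). x i * x j))) \<le> 2 ^ n * q ^ 4"
proof -
  define E2 where "E2 = {A. A \<subseteq> {1..n} \<and> card A = 2}"
  define E4 where "E4 = {A. A \<subseteq> {1..n} \<and> even (card A) \<and> 4 \<le> card A}"
  have fin: "finite E2" "finite E4"
    unfolding E2_def E4_def by (auto intro: finite_subset[of _ "Pow {1..n}"])
  have "{A. A \<subseteq> {1..n} \<and> even (card A)} = insert {} (E2 \<union> E4)"
  proof -
    have "A = {} \<or> A \<in> E2 \<union> E4" if "A \<subseteq> {1..n}" "even (card A)" for A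
    proof -
      have "finite A" using that(1) finite_subset by blast
      moreover have "card A = 0 \<or> card A = 2 \<or> 4 \<le> card A"
        using that(2) by presburger
      ultimately show ?thesis
        using that unfolding E2_def E4_def by auto
    qed
    then show ?thesis
      unfolding E2_def E4_def by auto
  qed
  moreover have "E2 \<inter> E4 = {}" "{} \<notin> E2 \<union> E4"
    unfolding E2_def E4_def by auto
  ultimately have "(\<Sum>A | A \<subseteq> {1..n} \<and> even (card A). \<Prod>i\<in>A. x i)
      = 1 + (\<Sum>A\<in>E2. \<Prod>i\<in>A. x i) + (\<Sum>A\<in>E4. \<Prod>i\<in>A. x i)"
    using fin by (simp add: sum.union_disjoint add.assoc)
  moreover have "(\<Sum>A\<in>E2. \<Prod>i\<in>A. x i) = (\<Sum>(i, j)\<in>(SIGMA i:{1..n}. {i<..n}). x i * x j)"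
    unfolding E2_def sum.reindex_bij_betw[OF bij_betw_strict_upper_pairs_doubletons, symmetric]
    by (intro sum.cong) auto
  moreover have "norm (\<Sum>A\<in>E4. \<Prod>i\<in>A. x i) \<le> 2 ^ n * q ^ 4"
  proof -
    have "norm (\<Sum>A\<in>E4. \<Prod>i\<in>A. x i) \<le> (\<Sum>A\<in>E4. q ^ 4)"
    proof (rule sum_norm_le)
      fix A assume "A \<in> E4"
      then have "norm (\<Prod>i\<in>A. x i) \<le> q ^ card A" "4 \<le> card A"
        using assms(1) by (auto simp: E4_def intro!: norm_prod_le_power_card)
      then show "norm (\<Prod>i\<in>A. x i) \<le> q ^ 4"
        using assms(2,3) power_decreasing by (metis order_trans)
    qed
    also have "\<dots> \<le> 2 ^ n * q ^ 4"
    proof -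
      have "card E4 \<le> card (Pow {1..n})"
        by (rule card_mono) (auto simp: E4_def)
      then have "card E4 \<le> 2 ^ n"
        by (simp add: card_Pow)
      then have "real (card E4) \<le> 2 ^ n"
        by (metis of_nat_le_iff of_nat_numeral of_nat_power)
      then show ?thesis
        using \<open>0 \<le> q\<close> by (simp add: mult_right_mono)
    qed
    finally show ?thesis .
  qed
  ultimately show ?thesis
    by simp
qed

text \<open>The constant \<gamma>^2 + (1 + \<gamma>) \<beta> + \<alpha> (1 + \<gamma> + \<beta>) of \<open>norm_mult_sub_one_le\<close> for
  \<alpha> = 3^(n choose 2), \<beta> = 2^n and \<gamma> = n choose 2.\<close>

definition Cpk_error_const :: "nat \<Rightarrow> real" where
  "Cpk_error_const n = (let t = real (n choose 2) in t\<^sup>2 + (1 + t) * 2 ^ n + 3 ^ (n choose 2) * (1 + t + 2 ^ n))"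

lemma norm_prod_strict_upper_mult_sum_even_subsets_sub_one_le:
  fixes x :: "nat \<Rightarrow> 'a::real_normed_field"
  assumes "\<And>i. i \<in> {1..n} \<Longrightarrow> norm (x i) \<le> q" and "0 \<le> q" and "q \<le> 1"
  shows "norm ((\<Prod>i\<in>{1..n}. \<Prod>j\<in>{i<..n}. 1 - x i * x j)
               * (\<Sum>A | A \<subseteq> {1..n} \<and> even (card A). \<Prod>i\<in>A. x i) - 1) \<le> Cpk_error_const n * q ^ 4"
proof -
  let ?e = "\<Sum>(i, j)\<in>(SIGMA i:{1..n}. {i<..n}). x i * x j"
  have "norm ?e \<le> (\<Sum>t\<in>(SIGMA i:{1..n}. {i<..n}). q\<^sup>2)"
    unfolding case_prod_unfold
  proof (rule sum_norm_le)
    fix t assume "t \<in> (SIGMA i:{1..n}. {i<..n})"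
    then show "norm (x (fst t) * x (snd t)) \<le> q\<^sup>2"
      using assms(1)[of "fst t"] assms(1)[of "snd t"] \<open>0 \<le> q\<close>
      by (auto simp: norm_mult power2_eq_square intro: mult_mono)
  qed
  also have "\<dots> = real (n choose 2) * q\<^sup>2"
    by (simp only: sum_constant card_strict_upper_pairs)
  finally have "norm ?e \<le> real (n choose 2) * q\<^sup>2" .
  with assms show ?thesis
    unfolding Cpk_error_const_def Let_def
    by (intro norm_mult_sub_one_le[OF norm_prod_strict_upper_sub_le[OF assms] norm_sum_even_subsets_sub_le[OF assms]]) auto
qed

lemma norm_one_div_nat_powr:
  assumes "0 < p"
  shows "norm (1 / (of_nat p :: complex) powr s) = real p powr - Re s"
  using assms by (simp add: norm_divide norm_powr_real_powr powr_minus_divide)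

lemma one_div_nat_powr_sum:
  assumes "0 < p"
  shows "1 / (of_nat p :: complex) powr (\<Sum>i\<in>I. of_nat (n i) * s i) = (\<Prod>i\<in>I. (1 / of_nat p powr s i) ^ n i)"
  using assms by (simp add: powr_sum powr_power power_one_over prod_dividef)

lemma Bpk_eq_infsum_prod_power:
  assumes "0 < p"
  shows "Bpk p m u a = infsum (\<lambda>n. \<Prod>i\<in>{1..m}. (1 / of_nat p powr u i) ^ n i)
           {n. (\<forall>i. i \<notin> {1..m} \<longrightarrow> n i = 0) \<and> (\<Sum>i\<in>{1..m}. n i) mod 2 = a mod 2}"
  unfolding Bpk_def using assms by (simp add: one_div_nat_powr_sum)

lemma Cpk_eq_one_div_powr:
  "Cpk p m u = (\<Prod>i\<in>{1..m}. \<Prod>j\<in>{i<..m}. 1 - (1 / of_nat p powr u i) * (1 / of_nat p powr u j))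
                 * (\<Sum>A | A \<subseteq> {1..m} \<and> even (card A). \<Prod>i\<in>A. 1 / of_nat p powr u i)"
  unfolding Cpk_def by (simp add: powr_add)

lemma Bpk_zero_eq_prod_mult_Cpk:
  fixes u :: "nat \<Rightarrow> complex"
  assumes "1 < p" and "\<And>i. i \<in> {1..m} \<Longrightarrow> 0 < Re (u i)"
  shows "Bpk p m u 0 = (\<Prod>i\<in>{1..m}. \<Prod>j\<in>{i..m}. inverse (1 - 1 / of_nat p powr (u i + u j))) * Cpk p m u"
proof -
  define x where "x i = 1 / (of_nat p :: complex) powr u i" for i
  have x: "norm (x i) < 1" if "i \<in> {1..m}" for i
    unfolding x_def using assms that by (simp add: norm_one_div_nat_powr powr_less_one)
  have "x i * x j \<noteq> 1" if "i \<in> {1..m}" "j \<in> {1..m}" for i j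
  proof -
    have "norm (x i * x j) < 1"
      using mult_strict_mono'[OF x[OF that(1)] x[OF that(2)]] by (simp add: norm_mult)
    then show ?thesis by auto
  qed
  then have "((\<Prod>i\<in>{1..m}. 1 / (1 - x i)) + (\<Prod>i\<in>{1..m}. 1 / (1 + x i))) / 2
      = (\<Prod>i\<in>{1..m}. \<Prod>j\<in>{i..m}. inverse (1 - x i * x j)) * Cpk p m u"
    unfolding Cpk_eq_one_div_powr x_def[symmetric] by (rule even_part_prod_geometric_eq)
  moreover have "Bpk p m u 0 = ((\<Prod>i\<in>{1..m}. 1 / (1 - x i)) + (\<Prod>i\<in>{1..m}. 1 / (1 + x i))) / 2"
    unfolding Bpk_eq_infsum_prod_power[OF order.strict_trans[OF zero_less_one assms(1)]] x_def[symmetric]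
      mod_0 even_iff_mod_2_eq_zero[symmetric]
    by (rule infsumI[OF has_sum_prod_geometric_even]) (use x in auto)
  ultimately show ?thesis
    by (simp add: x_def powr_add)
qed

lemma norm_Cpk_sub_one_le:
  fixes u :: "nat \<Rightarrow> complex"
  assumes "1 < p" and "0 \<le> \<theta>" and "\<And>i. i \<in> {1..m} \<Longrightarrow> \<theta> \<le> Re (u i)"
  shows "norm (Cpk p m u - 1) \<le> Cpk_error_const m / real p powr (4 * \<theta>)"
proof -
  let ?q = "real p powr - \<theta>"
  have "norm (1 / (of_nat p :: complex) powr u i) \<le> ?q" if "i \<in> {1..m}" for i
    using assms that by (simp add: norm_one_div_nat_powr)
  moreover have "0 \<le> ?q" "?q \<le> 1"
    using powr_mono[of "- \<theta>" 0 "real p"] assms by simp_all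
  ultimately have "norm (Cpk p m u - 1) \<le> Cpk_error_const m * ?q ^ 4"
    unfolding Cpk_eq_one_div_powr by (rule norm_prod_strict_upper_mult_sum_even_subsets_sub_one_le)
  also have "?q ^ 4 = real p powr (4 * - \<theta>)"
    using assms by (subst powr_power) auto
  also have "\<dots> = 1 / real p powr (4 * \<theta>)"
    by (simp add: powr_minus_divide)
  finally show ?thesis
    by simp
qed

theorem lemmaA2:
  fixes k :: nat and \<theta> :: real
  assumes "k \<ge> 1" and "\<theta> > 0"
  shows "(\<forall>(p::nat) (u::nat \<Rightarrow> complex). prime p \<longrightarrow> (\<forall>i\<in>{1..2*k}. Re (u i) \<ge> \<theta>) \<longrightarrow>
            Bpk p (2*k) u 0 =
              (\<Prod>i\<in>{1..2*k}. \<Prod>j\<in>{i..2*k}. inverse (1 - 1 / (of_nat p) powr (u i + u j)))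
              * Cpk p (2*k) u)
       \<and> (\<exists>M::real. \<forall>(p::nat) (u::nat \<Rightarrow> complex). prime p \<longrightarrow> (\<forall>i\<in>{1..2*k}. Re (u i) \<ge> \<theta>) \<longrightarrow>
            norm (Cpk p (2*k) u - 1) \<le> M / (real p) powr (4 * \<theta>))"
proof (intro conjI allI impI exI[of _ "Cpk_error_const (2 * k)"])
  fix p :: nat and u :: "nat \<Rightarrow> complex"
  assume "prime p" and u: "\<forall>i\<in>{1..2*k}. Re (u i) \<ge> \<theta>"
  \<comment> \<open>Primality is used only through \<open>p > 1\<close>.\<close>
  from \<open>prime p\<close> have "1 < p"
    by (rule prime_gt_1_nat)
  then show "Bpk p (2*k) u 0 =
      (\<Prod>i\<in>{1..2*k}. \<Prod>j\<in>{i..2*k}. inverse (1 - 1 / (of_nat p) powr (u i + u j))) * Cpk p (2*k) u"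
    using u \<open>\<theta> > 0\<close> by (intro Bpk_zero_eq_prod_mult_Cpk) force+
  show "norm (Cpk p (2*k) u - 1) \<le> Cpk_error_const (2 * k) / real p powr (4 * \<theta>)"
    using \<open>1 < p\<close> u \<open>\<theta> > 0\<close> by (intro norm_Cpk_sub_one_le) auto
qed

end
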